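(* Let $\ell=\mathrm{AF}$ and suppose $L^{\mathrm{AF}}=0$ and the following conditions hold: 1) $T^{\mathrm{AF}}=I-H^{\mathrm{AF}}C$; 2) $(I-H^{\mathrm{AF}}C)F_2=0$; 3) $\check F^{\mathrm{AF}}$ is Hurwitz. Then the residual signal $res_{\mathrm{AF}}(t)=y_{\mathrm p}(t)-C\hat x^{\mathrm{AF}}(t)$ is affected by the actuator fault $f_1(t)$ and is decoupled from $a_{\mathrm u}(t)$, $a_{\mathrm y}(t)$ and $f_2(t)$.
   Context: Consider the augmented linear time-invariant cyber-physical system $$\dot x(t)=Ax(t)+Bu(t)+B_{\mathrm a}a_{\mathrm u}(t)+F_1f_1(t)+F_2f_2(t)+N\omega(t),\quad y_{\mathrm p}(t)=Cx(t),\quad y^*(t)=Cx(t)+D_{\mathrm a}a_{\mathrm y}(t),$$ with $x(t)\in\mathbb R^{n+p_{\mathrm f}+p}$ obtained by stacking a plant state $x^{\mathrm s}\in\mathbb R^n$ and the state $x^{\mathrm a}\in\mathbb R^{p_{\mathrm f}+p}$ of an auxiliary system representing sensor faults and sensor noise, so that $A=\mathrm{diag}(A^{\mathrm s},A^{\mathrm a})$, $B=[B^{\mathrm s\top},0]^\top$, $B_{\mathrm a}=[(B^{\mathrm s}S_{\mathrm a})^\top,0]^\top$, $F_1=[L_1^\top,0]^\top$, $F_2=[0,L_2^{\mathrm a\top}]^\top$, $N=\mathrm{diag}(N^{\mathrm s},N^{\mathrm a})$, $C=[C^{\mathrm s},C^{\mathrm a}]$. Here $u(t)\in\mathbb R^m$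 is the control command (known on the command-and-control (C\&C) side), $u^*(t)=u(t)+S_{\mathrm a}a_{\mathrm u}(t)$ is the input received at the plant, $a_{\mathrm u}(t)$ is an actuator cyber attack, $a_{\mathrm y}(t)$ a sensor cyber attack, $f_1$ an actuator fault, $f_2$ a pseudo actuator fault (representing sensor faults), $\omega$ noise; $y_{\mathrm p}$ is the output measured on the plant side and $y^*$ the output received on the C\&C side. A communication link between the two sides is subject to a cyber attack $a_{\mathrm c}(t)$ with signature $D_{\mathrm{ac}}\in\mathbb R^{n\times n_{\mathrm c}}$. For an index $\ell\in\{\mathrm{AA},\mathrm{SA},\mathrm{AF},\mathrm{SF}\}$, a C\&C side filter $\dot z_{\mathrm c}^\ell=F_{\mathrm p}^\ell z_{\mathrm c}^\ell+T_{\mathrm p}^\ell Bu+K_{\mathrm p}^\ell y^*$ and a plant side filter $\dot z_{\mathrm p}^\ell=F_{\mathrm p}^\ell z_{\mathrm p}^\ell+T_{\mathrm p}^\ell Bu^*+K_{\mathrm p}^\ell y_{\mathrm p}+L_{\mathrm p}^\ell\big(z_{\mathrm p}^\ell-(z_{\mathrm c}^\ell+D_{\mathrm{ac}}a_{\mathrm c})\big)$ are used, with $z_{\mathrm c}^\ell,z_{\mathrm p}^\ell\in\mathbb R^n$, together with a UIO-based detector on the plant side $$\dot z^\ell=F^\ell z^\ell+T^\ell Bu^*+K^\ell y_{\mathrm p}+L^\ell\big(z_{\mathrm p}^\ell-(z_{\mathrm c}^\ell+D_{\mathrm{ac}}a_{\mathrm c})\big),\qquad \hat x^\ell=z^\ell+H^\ell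 y_{\mathrm p},$$ where $F^\ell=A-H^\ell CA-K_1^\ell C$ and $K^\ell=K_1^\ell+F^\ell H^\ell$ for some gain $K_1^\ell$. The residual is $res_\ell(t)=y_{\mathrm p}(t)-C\hat x^\ell(t)=Ce^\ell(t)$ with $e^\ell=x-\hat x^\ell$. With $e_{\mathrm p}^\ell=z_{\mathrm p}^\ell-z_{\mathrm c}^\ell$, the stacked error $\check e^\ell=[e^{\ell\top},e_{\mathrm p}^{\ell\top}]^\top$ has state matrix $\check F^\ell=\begin{bmatrix}F^\ell&-L^\ell\\0&F_{\mathrm p}^\ell+L_{\mathrm p}^\ell\end{bmatrix}$; explicitly $\dot e^\ell=F^\ell e^\ell+(I-T^\ell-H^\ell C)(Bu+B_{\mathrm a}a_{\mathrm u})+(I-H^\ell C)F_1f_1+(I-H^\ell C)F_2f_2+(I-H^\ell C)N\omega-L^\ell e_{\mathrm p}^\ell-L^\ell D_{\mathrm{ac}}a_{\mathrm c}$ and $\dot e_{\mathrm p}^\ell=(F_{\mathrm p}^\ell+L_{\mathrm p}^\ell)e_{\mathrm p}^\ell+T_{\mathrm p}^\ell B_{\mathrm a}a_{\mathrm u}-K_{\mathrm p}^\ell D_{\mathrm a}a_{\mathrm y}-L_{\mathrm p}^\ell D_{\mathrm{ac}}a_{\mathrm c}$. The residual $res_\ell$ is called decoupled from an anomalous signal in $\{a_{\mathrm u},a_{\mathrm y},f_1,f_2\}$ if the dynamics and trajectory of $res_\ell$ are not affected by that signal. *)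

theory Defs
  imports "HOL-Analysis.Analysis"
begin

text \<open>Block matrices. Matrices are of type real^'cols^'rows, i.e. M $ row $ col.\<close>

definition blkdiag :: "real^'c1^'r1 \<Rightarrow> real^'c2^'r2 \<Rightarrow> real^('c1+'c2)^('r1+'r2)" where
  "blkdiag P Q = (\<chi> i j. case i of
      Inl i' \<Rightarrow> (case j of Inl j' \<Rightarrow> P $ i' $ j' | Inr _ \<Rightarrow> 0)
    | Inr i' \<Rightarrow> (case j of Inl _ \<Rightarrow> 0 | Inr j' \<Rightarrow> Q $ i' $ j'))"

definition vstack :: "real^'c^'r1 \<Rightarrow> real^'c^'r2 \<Rightarrow> real^'c^('r1+'r2)" where
  "vstack P Q = (\<chi> i j. case i of Inl i' \<Rightarrow> P $ i' $ j | Inr i' \<Rightarrow> Q $ i' $ j)"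

definition hstack :: "real^'c1^'r \<Rightarrow> real^'c2^'r \<Rightarrow> real^('c1+'c2)^'r" where
  "hstack P Q = (\<chi> i j. case j of Inl j' \<Rightarrow> P $ i $ j' | Inr j' \<Rightarrow> Q $ i $ j')"

definition hurwitz :: "real^'n^'n \<Rightarrow> bool" where
  "hurwitz M \<longleftrightarrow> (\<forall>ev::complex. (\<exists>v::complex^'n. v \<noteq> 0 \<and>
      (\<chi> i j. complex_of_real (M $ i $ j)) *v v = ev *s v) \<longrightarrow> Re ev < 0)"

text \<open>Trajectories (on t \<ge> 0) of the closed loop consisting of the augmented plant,
  the C&C side filter z_c, the plant side filter z_p and the UIO-based detector z
  (all for the index AF).\<close>

definition cps_traj ::
  "real^'x^'x \<Rightarrow> real^'m^'x \<Rightarrow> real^'q^'x \<Rightarrow> real^'q^'m \<Rightarrow> real^'f1^'x \<Rightarrow> real^'f2^'x \<Rightarrow> real^'w^'x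
   \<Rightarrow> real^'x^'o \<Rightarrow> real^'r^'o \<Rightarrow> real^'c^'s
   \<Rightarrow> real^'s^'s \<Rightarrow> real^'x^'s \<Rightarrow> real^'o^'s \<Rightarrow> real^'s^'s
   \<Rightarrow> real^'x^'x \<Rightarrow> real^'x^'x \<Rightarrow> real^'o^'x \<Rightarrow> real^'s^'x
   \<Rightarrow> (real \<Rightarrow> real^'m) \<Rightarrow> (real \<Rightarrow> real^'q) \<Rightarrow> (real \<Rightarrow> real^'r) \<Rightarrow> (real \<Rightarrow> real^'f1)
   \<Rightarrow> (real \<Rightarrow> real^'f2) \<Rightarrow> (real \<Rightarrow> real^'w) \<Rightarrow> (real \<Rightarrow> real^'c)
   \<Rightarrow> (real \<Rightarrow> real^'x) \<Rightarrow> (real \<Rightarrow> real^'s) \<Rightarrow> (real \<Rightarrow> real^'s) \<Rightarrow> (real \<Rightarrow> real^'x) \<Rightarrow> bool"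
  where
  "cps_traj A B Ba Sa F1 F2 N C Da Dac Fp Tp Kp Lp F T K L u au ay f1 f2 w ac x zc zp z \<longleftrightarrow>
    (\<forall>t\<ge>0.
      (x has_vector_derivative
         (A *v x t + B *v u t + Ba *v au t + F1 *v f1 t + F2 *v f2 t + N *v w t))
         (at t within {0..}) \<and>
      (zc has_vector_derivative
         (Fp *v zc t + Tp *v (B *v u t) + Kp *v (C *v x t + Da *v ay t)))
         (at t within {0..}) \<and>
      (zp has_vector_derivative
         (Fp *v zp t + Tp *v (B *v (u t + Sa *v au t)) + Kp *v (C *v x t)
          + Lp *v (zp t - (zc t + Dac *v ac t))))
         (at t within {0..}) \<and>
      (z has_vector_derivative
         (F *v z t + T *v (B *v (u t + Sa *v au t)) + K *v (C *v x t)
          + L *v (zp t - (zc t + Dac *v ac t))))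
         (at t within {0..}))"

definition xhat :: "real^'o^'x \<Rightarrow> real^'x^'o \<Rightarrow> (real \<Rightarrow> real^'x) \<Rightarrow> (real \<Rightarrow> real^'x) \<Rightarrow> real \<Rightarrow> real^'x" where
  "xhat H C x z t = z t + H *v (C *v x t)"

definition residual :: "real^'o^'x \<Rightarrow> real^'x^'o \<Rightarrow> (real \<Rightarrow> real^'x) \<Rightarrow> (real \<Rightarrow> real^'x) \<Rightarrow> real \<Rightarrow> real^'o" where
  "residual H C x z t = C *v x t - C *v xhat H C x z t"

end

theory Submission
  imports Defs
begin

text \<open>With \<open>T = I - H C\<close> and \<open>B\<^sub>a = B S\<^sub>a\<close>, the known and attacked inputs enter the
  estimation error \<open>e = x - x_hat\<close> only through \<open>(I - H C)(B u + B\<^sub>a a\<^sub>u) - T B (u + S\<^sub>a a\<^sub>u) = 0\<close>,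
  the pseudo fault only through \<open>(I - H C) F\<^sub>2 f\<^sub>2 = 0\<close>, and \<open>L = 0\<close> cuts off the filters
  (the only way \<open>a\<^sub>y\<close> could enter); so \<open>e' = F e + (I - H C)(F\<^sub>1 f\<^sub>1 + N \<omega>)\<close>. For two
  trajectories differing only in \<open>a\<^sub>u, a\<^sub>y, f\<^sub>2\<close> with equal initial errors, the difference of the
  errors solves \<open>d' = F d\<close>, \<open>d(0) = 0\<close>, hence vanishes, and so does that of the residuals
  \<open>C e\<close>.\<close>

lemma bounded_linear_ode_zero:
  fixes f :: "'a::real_inner \<Rightarrow> 'a" and d :: "real \<Rightarrow> 'a"
  assumes f: "bounded_linear f"
    and d': "\<forall>s\<ge>0. (d has_vector_derivative f (d s)) (at s within {0..})"
    and d0: "d 0 = 0" and t: "t \<ge> 0"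
  shows "d t = 0"
proof -
  obtain K where K: "\<And>v. norm (f v) \<le> norm v * K"
    using bounded_linear.pos_bounded[OF f] by blast
  \<comment> \<open>Energy estimate: \<open>exp (-2 K s) \<parallel>d s\<parallel>\<^sup>2\<close> is non-increasing.\<close>
  define h where "h s = exp (-2*K * s) * (d s \<bullet> d s)" for s
  define h' where "h' s = exp (-2*K * s) * (2 * (d s \<bullet> f (d s)) - 2*K * (d s \<bullet> d s))" for s
  have h': "(h has_real_derivative h' s) (at s within {0..t})" if "0 \<le> s" for s
  proof -
    have "(d has_vector_derivative f (d s)) (at s within {0..t})"
      using d' that has_vector_derivative_within_subset by fastforce
    from bounded_bilinear.has_vector_derivative[OF bounded_bilinear_inner this this]
    have "((\<lambda>s. d s \<bullet> d s) has_real_derivative 2 * (d s \<bullet> f (d s))) (at s within {0..t})"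
      by (simp add: has_real_derivative_iff_has_vector_derivative inner_commute)
    then show ?thesis
      unfolding h_def h'_def by (auto intro!: derivative_eq_intros simp: algebra_simps)
  qed
  have h'_nonpos: "h' s \<le> 0" for s
  proof -
    have "d s \<bullet> f (d s) \<le> norm (d s) * norm (f (d s))" by (rule norm_cauchy_schwarz)
    also have "\<dots> \<le> norm (d s) * (norm (d s) * K)" by (simp add: K mult_left_mono)
    also have "\<dots> = K * (d s \<bullet> d s)" by (simp add: dot_square_norm power2_eq_square)
    finally show ?thesis unfolding h'_def by (simp add: mult_nonneg_nonpos)
  qed
  obtain \<xi> where "h t - h 0 = h' \<xi> * t"
    using mvt_very_simple[OF t, of h "\<lambda>s y. h' s * y"] h'
    by (auto simp: has_field_derivative_def)
  moreover have "h' \<xi> * t \<le> 0"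
    using h'_nonpos t by (simp add: mult_nonpos_nonneg)
  ultimately have "h t \<le> h 0"
    by linarith
  then have "d t \<bullet> d t \<le> 0"
    using d0 unfolding h_def by (simp add: mult_le_0_iff)
  then show ?thesis
    using inner_ge_zero[of "d t"] by (simp add: order_antisym)
qed

lemma vstack_matrix_mult: "vstack P Q ** M = vstack (P ** M) (Q ** M)"
  by (simp add: vec_eq_iff vstack_def matrix_matrix_mult_def split: sum.split)

lemma residual_eq_C_error: "residual H C x z t = C *v (x t - xhat H C x z t)"
  unfolding residual_def by (simp add: matrix_vector_mult_diff_distrib)

lemma has_vector_derivative_estimation_error:
  assumes "(x has_vector_derivative X) (at t within S)"
    and "(z has_vector_derivative Z) (at t within S)"
  shows "((\<lambda>s. x s - xhat H C x z s) has_vector_derivative X - (Z + H *v (C *v X)))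
           (at t within S)"
  unfolding xhat_def
  by (intro has_vector_derivative_diff has_vector_derivative_add assms
      bounded_linear.has_vector_derivative[OF matrix_vector_mul_bounded_linear])

lemma uio_error_dynamics_rhs:
  fixes A :: "real^'n^'n" and H :: "real^'o^'n" and F2 :: "real^'f2^'n"
    and B Ba F1 N x u au f1 f2 w
  assumes F_def: "F = A - H ** C ** A - K1 ** C"
    and K_def: "K = K1 + F ** H"
    and T_def: "T = mat 1 - H ** C"
    and Ba_def: "Ba = B ** Sa"
    and HCF2: "(mat 1 - H ** C) ** F2 = 0"
  defines "X \<equiv> A *v x + B *v u + Ba *v au + F1 *v f1 + F2 *v f2 + N *v w"
  shows "X - (F *v z + T *v (B *v (u + Sa *v au)) + K *v (C *v x) + H *v (C *v X))
         = F *v (x - (z + H *v (C *v x))) + (mat 1 - H ** C) *v (F1 *v f1)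
           + (mat 1 - H ** C) *v (N *v w)"
proof -
  have "(mat 1 - H ** C) *v (F2 *v f2) = 0"
    using HCF2 by (simp add: matrix_vector_mul_assoc)
  then have "H *v (C *v (F2 *v f2)) = F2 *v f2"
    by (simp add: matrix_vector_mult_diff_rdistrib matrix_vector_mul_assoc[symmetric])
  then show ?thesis
    unfolding X_def F_def K_def T_def Ba_def
    by (simp add: matrix_vector_mul_assoc[symmetric] matrix_vector_mult_add_rdistrib
        matrix_vector_mult_diff_rdistrib matrix_vector_right_distrib
        matrix_vector_mult_diff_distrib algebra_simps)
qed

context
  fixes A F T :: "real^'n^'n" and B :: "real^'m^'n" and Ba :: "real^'q^'n" and Sa :: "real^'q^'m"
    and F2 :: "real^'f2^'n" and C :: "real^'n^'o" and H K K1 :: "real^'o^'n" and L :: "real^'s^'n"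
  assumes F_def: "F = A - H ** C ** A - K1 ** C"
    and K_def: "K = K1 + F ** H"
    and T_def: "T = mat 1 - H ** C"
    and Ba_def: "Ba = B ** Sa"
    and HCF2: "(mat 1 - H ** C) ** F2 = 0"
    and L_zero: "L = 0"
begin

lemma cps_traj_estimation_error_derivative:
  assumes "cps_traj A B Ba Sa F1 F2 N C Da Dac Fp Tp Kp Lp F T K L u au ay f1 f2 w ac x zc zp z"
    and "t \<ge> 0"
  shows "((\<lambda>s. x s - xhat H C x z s) has_vector_derivative
      F *v (x t - xhat H C x z t) + (mat 1 - H ** C) *v (F1 *v f1 t)
      + (mat 1 - H ** C) *v (N *v w t)) (at t within {0..})"
proof -
  have "(x has_vector_derivative
          A *v x t + B *v u t + Ba *v au t + F1 *v f1 t + F2 *v f2 t + N *v w t)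
          (at t within {0..})"
    and "(z has_vector_derivative
          F *v z t + T *v (B *v (u t + Sa *v au t)) + K *v (C *v x t))
          (at t within {0..})"
    using assms unfolding cps_traj_def by (auto simp: L_zero)
  from has_vector_derivative_estimation_error[OF this, of H C]
  show ?thesis
    unfolding uio_error_dynamics_rhs[OF F_def K_def T_def Ba_def HCF2] add.assoc[symmetric]
    by (simp add: xhat_def)
qed

lemma cps_traj_residual_decoupled:
  assumes traj: "cps_traj A B Ba Sa F1 F2 N C Da Dac Fp Tp Kp Lp F T K L u au ay f1 f2 w ac x zc zp z"
    and traj': "cps_traj A B Ba Sa F1 F2 N C Da Dac Fp Tp Kp Lp F T K L u au' ay' f1 f2' w ac x' zc' zp' z'"
    and "x 0 - xhat H C x z 0 = x' 0 - xhat H C x' z' 0" and "t \<ge> 0"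
  shows "residual H C x z t = residual H C x' z' t"
proof -
  define d where "d = (\<lambda>s. (x s - xhat H C x z s) - (x' s - xhat H C x' z' s))"
  have "(d has_vector_derivative F *v d s) (at s within {0..})" if "s \<ge> 0" for s
    using has_vector_derivative_diff[OF cps_traj_estimation_error_derivative[OF traj that]
        cps_traj_estimation_error_derivative[OF traj' that]]
    by (simp add: d_def matrix_vector_mult_diff_distrib)
  then have "d t = 0"
    using bounded_linear_ode_zero[OF matrix_vector_mul_bounded_linear, of d F t] assms(3,4)
    by (simp add: d_def)
  then show ?thesis by (simp add: residual_eq_C_error d_def)
qed

end

theorem proposition3:
  fixes As :: "real^'s^'s" and Aa :: "real^'a^'a"
    and Bs :: "real^'m^'s" and Sa :: "real^'q^'m"
    and L1 :: "real^'f1^'s" and L2a :: "real^'f2^'a"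
    and Ns :: "real^'ws^'s" and Na :: "real^'wa^'a"
    and Cs :: "real^'s^'o" and Ca :: "real^'a^'o"
    and Da :: "real^'r^'o" and Dac :: "real^'c^'s"
    and A :: "real^('s+'a)^('s+'a)" and B :: "real^'m^('s+'a)"
    and Ba :: "real^'q^('s+'a)" and F1 :: "real^'f1^('s+'a)" and F2 :: "real^'f2^('s+'a)"
    and N :: "real^('ws+'wa)^('s+'a)" and C :: "real^('s+'a)^'o"
    and Fp :: "real^'s^'s" and Tp :: "real^('s+'a)^'s" and Kp :: "real^'o^'s" and Lp :: "real^'s^'s"
    and F :: "real^('s+'a)^('s+'a)" and T :: "real^('s+'a)^('s+'a)"
    and K :: "real^'o^('s+'a)" and K1 :: "real^'o^('s+'a)"
    and H :: "real^'o^('s+'a)" and L :: "real^'s^('s+'a)"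
    and Fcheck :: "real^(('s+'a)+'s)^(('s+'a)+'s)"
  assumes A_def: "A = blkdiag As Aa"
    and B_def: "B = vstack Bs 0"
    and Ba_def: "Ba = vstack (Bs ** Sa) 0"
    and F1_def: "F1 = vstack L1 0"
    and F2_def: "F2 = vstack 0 L2a"
    and N_def: "N = blkdiag Ns Na"
    and C_def: "C = hstack Cs Ca"
    and F_def: "F = A - H ** C ** A - K1 ** C"
    and K_def: "K = K1 + F ** H"
    and Fcheck_def: "Fcheck = vstack (hstack F (- L)) (hstack 0 (Fp + Lp))"
    and L_zero: "L = 0"
    and cond1: "T = mat 1 - H ** C"
    and cond2: "(mat 1 - H ** C) ** F2 = 0"
    and cond3: "hurwitz Fcheck"
  shows
    \<comment> \<open>dynamics of the residual: res = C e, with e driven by f1 (and noise) only\<close>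
    "(\<forall>u au ay f1 f2 w ac x zc zp z.
        cps_traj A B Ba Sa F1 F2 N C Da Dac Fp Tp Kp Lp F T K L u au ay f1 f2 w ac x zc zp z \<longrightarrow>
        (\<forall>t\<ge>0.
          ((\<lambda>s. x s - xhat H C x z s) has_vector_derivative
             (F *v (x t - xhat H C x z t) + (mat 1 - H ** C) *v (F1 *v f1 t)
              + (mat 1 - H ** C) *v (N *v w t))) (at t within {0..}) \<and>
          residual H C x z t = C *v (x t - xhat H C x z t)))
     \<and>
     \<comment> \<open>decoupling: the residual trajectory does not depend on a_u, a_y, f_2\<close>
     (\<forall>u f1 w ac au ay f2 x zc zp z au' ay' f2' x' zc' zp' z'.
        cps_traj A B Ba Sa F1 F2 N C Da Dac Fp Tp Kp Lp F T K L u au ay f1 f2 w ac x zc zp z \<longrightarrow>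
        cps_traj A B Ba Sa F1 F2 N C Da Dac Fp Tp Kp Lp F T K L u au' ay' f1 f2' w ac x' zc' zp' z' \<longrightarrow>
        x 0 - xhat H C x z 0 = x' 0 - xhat H C x' z' 0 \<longrightarrow>
        (\<forall>t\<ge>0. residual H C x z t = residual H C x' z' t))"
proof -
  have Ba_eq: "Ba = B ** Sa"
    unfolding Ba_def B_def by (simp add: vstack_matrix_mult)
  note assms' = F_def K_def cond1 Ba_eq cond2 L_zero
  show ?thesis
  proof (intro conjI allI impI)
  qed (rule cps_traj_estimation_error_derivative[OF assms'] cps_traj_residual_decoupled[OF assms']
        residual_eq_C_error; assumption)+
qed

end
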